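(* For every integer $k\geqslant 1$, there exists a finite word $W$ over a $3$-letter alphabet with $r(W)\geqslant k$.
   Context: A square is a finite non-empty word of the form $XX$; a word is square-free if it has no square factor. A square reduction replaces a word $UXXV$ (with $X$ non-empty) by $UXV$. A reduct of $W$ is any square-free word obtainable from $W$ by a finite sequence of square reductions, and $r(W)$ is the number of distinct reducts of $W$. *)

theory Defs
  imports Main
begin

definition square_free :: "'a list \<Rightarrow> bool" where
  "square_free w \<longleftrightarrow> \<not> (\<exists>u x v. x \<noteq> [] \<and> w = u @ x @ x @ v)"

definition sq_step :: "'a list \<Rightarrow> 'a list \<Rightarrow> bool" where
  "sq_step w w' \<longleftrightarrow> (\<exists>u x v. x \<noteq> [] \<and> w = u @ x @ x @ v \<and> w' = u @ x @ v)"

definition reducts :: "'a list \<Rightarrow> 'a list set" where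
  "reducts w = {w'. sq_step\<^sup>*\<^sup>* w w' \<and> square_free w'}"

definition r :: "'a list \<Rightarrow> nat" where
  "r w = card (reducts w)"

end

theory Submission
  imports Defs
begin

text \<open>The ternary Thue--Morse word \<open>vtm\<close>, the difference word of the overlap-free
  Thue--Morse sequence \<open>t\<close>, is square-free. At every zero \<open>z\<close> of \<open>t\<close> the word \<open>vtm\<close> has the
  block \<open>210\<close> at position \<open>4z\<close>; let \<open>P\<^sub>z\<close> be the prefix ending with it. Consecutive zeros of
  \<open>t\<close> are at most three apart, and for each possible gap there is a gadget \<open>G\<close> such that
  \<open>210 G\<close> reduces both to \<open>210\<close> and to the factor of \<open>vtm\<close> reaching the \<open>210\<close> of the next
  zero. Appending gadgets gap by gap yields a ternary word reducing to every \<open>P\<^sub>z\<close> with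
  \<open>z \<le> 2k\<close>: at least \<open>k\<close> distinct square-free reducts.\<close>

lemma sq_stepI: "x \<noteq> [] \<Longrightarrow> sq_step (u @ x @ x @ v) (u @ x @ v)"
  unfolding sq_step_def by blast

lemma sq_step_append_context: "sq_step w w' \<Longrightarrow> sq_step (p @ w @ q) (p @ w' @ q)"
  unfolding sq_step_def by (metis append.assoc)

lemma reduces_append_context:
  "sq_step\<^sup>*\<^sup>* w w' \<Longrightarrow> sq_step\<^sup>*\<^sup>* (p @ w @ q) (p @ w' @ q)"
  by (induction rule: rtranclp_induct) (auto intro: rtranclp.rtrancl_into_rtrancl sq_step_append_context)

lemma reduces_append_left: "sq_step\<^sup>*\<^sup>* w w' \<Longrightarrow> sq_step\<^sup>*\<^sup>* (p @ w) (p @ w')"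
  using reduces_append_context[of w w' p "[]"] by simp

lemma reduces_append_right: "sq_step\<^sup>*\<^sup>* w w' \<Longrightarrow> sq_step\<^sup>*\<^sup>* (w @ q) (w' @ q)"
  using reduces_append_context[of w w' "[]" q] by simp

lemma reduces_set_length:
  "sq_step\<^sup>*\<^sup>* w w' \<Longrightarrow> set w' \<subseteq> set w \<and> length w' \<le> length w"
  by (induction rule: rtranclp_induct) (auto simp: sq_step_def)

lemma finite_reducts: "finite (reducts w)"
proof (rule finite_subset)
  show "reducts w \<subseteq> {v. set v \<subseteq> set w \<and> length v \<le> length w}"
    unfolding reducts_def using reduces_set_length by blast
  show "finite {v. set v \<subseteq> set w \<and> length v \<le> length w}"
    by (rule finite_lists_length_le) simp
qed

definition square_at :: "nat \<Rightarrow> nat \<Rightarrow> 'a list \<Rightarrow> bool" where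
  "square_at i l w \<longleftrightarrow> 0 < l \<and> i + 2*l \<le> length w \<and> take l (drop i w) = take l (drop (i+l) w)"

definition contract_at :: "nat \<Rightarrow> nat \<Rightarrow> 'a list \<Rightarrow> 'a list" where
  "contract_at i l w = take (i+l) w @ drop (i+2*l) w"

lemma sq_step_contract_at:
  assumes "square_at i l w"
  shows "sq_step w (contract_at i l w)"
proof -
  define x where "x = take l (drop i w)"
  from assms have "0 < l" and "i + 2*l \<le> length w"
    and half: "take l (drop i w) = take l (drop (i+l) w)" by (auto simp: square_at_def)
  then have "x \<noteq> []" by (simp add: x_def)
  have "w = take i w @ x @ x @ drop (i+2*l) w"
    by (metis x_def half append_take_drop_id drop_drop add.commute mult_2 add.assoc)
  moreover have "contract_at i l w = take i w @ x @ drop (i+2*l) w"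
    by (simp add: contract_at_def x_def take_add)
  ultimately show ?thesis
    using sq_stepI[OF \<open>x \<noteq> []\<close>] by metis
qed

text \<open>Reductions of concrete words are certified by the list of pairs (position, half-length)
  of the squares contracted, and checked by evaluation.\<close>

fun contract_seq :: "(nat \<times> nat) list \<Rightarrow> 'a list \<Rightarrow> 'a list option" where
  "contract_seq [] w = Some w"
| "contract_seq ((i, l) # ss) w =
     (if square_at i l w then contract_seq ss (contract_at i l w) else None)"

lemma contract_seq_reduces: "contract_seq ss w = Some w' \<Longrightarrow> sq_step\<^sup>*\<^sup>* w w'"
proof (induction ss w rule: contract_seq.induct)
  case (2 i l ss w)
  then have "square_at i l w" and "sq_step\<^sup>*\<^sup>* (contract_at i l w) w'"
    by (simp_all split: if_splits)
  then show ?case by (meson converse_rtranclp_into_rtranclp sq_step_contract_at)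
qed simp

fun thue_morse :: "nat \<Rightarrow> bool" where
  "thue_morse n = (if n = 0 then False else thue_morse (n div 2) \<noteq> odd n)"

declare thue_morse.simps [simp del]

lemma thue_morse_0 [simp]: "\<not> thue_morse 0"
  by (simp add: thue_morse.simps)

lemma thue_morse_double [simp]: "thue_morse (2*n) = thue_morse n"
  by (cases "n = 0") (simp_all add: thue_morse.simps[of "2*n"])

lemma thue_morse_Suc_double [simp]: "thue_morse (Suc (2*n)) \<longleftrightarrow> \<not> thue_morse n"
  by (simp add: thue_morse.simps[of "Suc (2*n)"])

lemma thue_morse_double_plus_parity: "thue_morse (2*n + b mod 2) \<longleftrightarrow> thue_morse n \<noteq> odd b"
  by (cases "even b") (simp_all add: odd_iff_mod_2_eq_one)

definition overlap_free :: "(nat \<Rightarrow> 'a) \<Rightarrow> bool" where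
  "overlap_free f \<longleftrightarrow> (\<forall>i m. 0 < m \<longrightarrow> (\<exists>j\<in>{i..i+m}. f (j + m) \<noteq> f j))"

text \<open>On a factor with odd period \<open>m\<close>, one of \<open>j\<close> and \<open>j + m\<close> is even, so the letter changes
  at every step; after the odd number \<open>m\<close> of steps it cannot have returned.\<close>

lemma thue_morse_odd_period:
  assumes "odd m"
  shows "\<exists>j\<in>{i..i+m}. thue_morse (j + m) \<noteq> thue_morse j"
proof (rule ccontr)
  assume "\<not> ?thesis"
  then have periodic: "thue_morse (j + m) = thue_morse j" if "i \<le> j" "j \<le> i + m" for j
    using that by auto
  have alternating: "thue_morse (Suc j) \<noteq> thue_morse j" if "i \<le> j" "j < i + m" for j
  proof (cases "even j")
    case True
    then show ?thesis by (auto elim: evenE)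
  next
    case False
    with \<open>odd m\<close> obtain q where "j + m = 2*q" by (metis evenE odd_add)
    then have "thue_morse (Suc (j + m)) \<noteq> thue_morse (j + m)" by simp
    then show ?thesis using periodic[of j] periodic[of "Suc j"] that by simp
  qed
  have "thue_morse (i + k) = (thue_morse i \<noteq> odd k)" if "k \<le> m" for k
    using that by (induction k) (use alternating in auto)
  then have "thue_morse (i + m) \<noteq> thue_morse i" using \<open>odd m\<close> by simp
  then show False using periodic[of i] by (simp add: add.commute)
qed

lemma overlap_free_thue_morse: "overlap_free thue_morse"
  unfolding overlap_free_def
proof (intro allI impI)
  fix i m :: nat
  assume "0 < m"
  then show "\<exists>j\<in>{i..i+m}. thue_morse (j + m) \<noteq> thue_morse j"
  proof (induction m arbitrary: i rule: less_induct)
    case (less m)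
    show ?case
    proof (cases "odd m")
      case True
      then show ?thesis by (rule thue_morse_odd_period)
    next
      case False
      then obtain h where m: "m = 2*h" by (auto elim: evenE)
      with less.prems have "h < m" "0 < h" by auto
      obtain j where j: "j \<in> {i div 2..i div 2 + h}" "thue_morse (j + h) \<noteq> thue_morse j"
        using less.IH[OF \<open>h < m\<close> \<open>0 < h\<close>] by blast
      define j' where "j' = 2*j + i mod 2"
      have "j' + m = 2*(j + h) + i mod 2" by (simp add: j'_def m)
      then have "thue_morse (j' + m) \<longleftrightarrow> thue_morse (j + h) \<noteq> odd i"
        by (simp only: thue_morse_double_plus_parity)
      moreover have "thue_morse j' \<longleftrightarrow> thue_morse j \<noteq> odd i"
        by (simp only: j'_def thue_morse_double_plus_parity)
      ultimately have "thue_morse (j' + m) \<noteq> thue_morse j'" using j(2) by auto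
      moreover have "j' \<in> {i..i+m}"
        using j(1) m div_mult_mod_eq[of i 2] unfolding j'_def atLeastAtMost_iff by linarith
      ultimately show ?thesis by blast
    qed
  qed
qed

definition diff_letter :: "(nat \<Rightarrow> bool) \<Rightarrow> nat \<Rightarrow> nat" where
  "diff_letter f k = nat (of_bool (f (Suc k)) - of_bool (f k) + 1)"

definition diff_word :: "(nat \<Rightarrow> bool) \<Rightarrow> nat \<Rightarrow> nat \<Rightarrow> nat list" where
  "diff_word f i n = map (diff_letter f) [i..<i+n]"

lemma int_diff_letter: "int (diff_letter f k) = of_bool (f (Suc k)) - of_bool (f k) + 1"
  by (simp add: diff_letter_def)

lemma length_diff_word [simp]: "length (diff_word f i n) = n"
  by (simp add: diff_word_def)

lemma nth_diff_word: "k < n \<Longrightarrow> diff_word f i n ! k = diff_letter f (i + k)"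
  by (simp add: diff_word_def)

lemma diff_word_add: "diff_word f i (a + b) = diff_word f i a @ diff_word f (i + a) b"
  unfolding diff_word_def using upt_add_eq_append[of i "i+a" b] by (simp add: add.assoc)

text \<open>A square in the difference word keeps \<open>f (j + l) - f j\<close> constant across it; as \<open>f\<close> is
  \<open>{0,1}\<close>-valued, twice that constant lies in \<open>{-1,0,1}\<close>, so it is \<open>0\<close> and \<open>f\<close> has an overlap.\<close>

lemma diff_letter_square_imp_periodic:
  assumes square: "\<And>j. j < l \<Longrightarrow> diff_letter f (a + j) = diff_letter f (a + l + j)"
    and "a \<le> j" "j \<le> a + l"
  shows "f (j + l) = f j"
proof -
  define D where "D j = of_bool (f (a + l + j)) - (of_bool (f (a + j)) :: int)" for j
  have D_const: "D j = D 0" if "j \<le> l" for j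
    using that
  proof (induction j)
    case (Suc j)
    then have "int (diff_letter f (a + j)) = int (diff_letter f (a + l + j))"
      using square by simp
    then have "D (Suc j) = D j" unfolding D_def int_diff_letter by simp
    with Suc show ?case by simp
  qed simp
  have "D l + D 0 = of_bool (f (a + l + l)) - of_bool (f a)" by (simp add: D_def)
  then have "D 0 = 0" using D_const[of l] by (simp add: of_bool_def split: if_splits)
  obtain t where j: "j = a + t" and "t \<le> l" using assms(2,3) le_Suc_ex by force
  then have "D t = 0" using D_const \<open>D 0 = 0\<close> by simp
  then show ?thesis by (simp add: D_def j algebra_simps of_bool_eq_iff)
qed

lemma square_free_diff_word:
  assumes "overlap_free f"
  shows "square_free (diff_word f i n)"
  unfolding square_free_def
proof (intro notI, elim exE conjE)
  fix u x v
  assume "x \<noteq> []" and w: "diff_word f i n = u @ x @ x @ v"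
  define a where "a = i + length u"
  define l where "l = length x"
  have "0 < l" using \<open>x \<noteq> []\<close> by (simp add: l_def)
  have len: "length u + 2*l \<le> n" using arg_cong[OF w, of length] by (simp add: l_def)
  have square: "diff_letter f (a + j) = diff_letter f (a + l + j)" if "j < l" for j
  proof -
    have "diff_word f i n ! (length u + j) = diff_word f i n ! (length u + l + j)"
      unfolding w using that by (simp add: nth_append l_def)
    then show ?thesis using that len by (simp add: nth_diff_word a_def add.assoc)
  qed
  have "f (j + l) = f j" if "j \<in> {a..a+l}" for j
    by (rule diff_letter_square_imp_periodic[OF square]) (use that in auto)
  with assms \<open>0 < l\<close> show False unfolding overlap_free_def by blast
qed

text \<open>\<open>vtm 0\<close> is the ternary Thue--Morse word \<open>2102012101202102\<dots>\<close>.\<close>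

abbreviation vtm :: "nat \<Rightarrow> nat \<Rightarrow> nat list" where
  "vtm \<equiv> diff_word thue_morse"

lemma diff_word_Suc: "diff_word f i (Suc n) = diff_letter f i # diff_word f (Suc i) n"
  by (simp add: diff_word_def upt_conv_Cons del: upt_Suc)

lemma thue_morse_quadruple:
  "thue_morse (4*m) \<longleftrightarrow> thue_morse m"
  "thue_morse (Suc (4*m)) \<longleftrightarrow> \<not> thue_morse m"
  "thue_morse (Suc (Suc (4*m))) \<longleftrightarrow> \<not> thue_morse m"
  "thue_morse (Suc (Suc (Suc (4*m)))) \<longleftrightarrow> thue_morse m"
  "thue_morse (Suc (Suc (Suc (Suc (4*m))))) \<longleftrightarrow> thue_morse (Suc m)"
  using thue_morse_double[of "2*m"] thue_morse_Suc_double[of "2*m"] thue_morse_double[of "Suc (2*m)"]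
    thue_morse_Suc_double[of "Suc (2*m)"] thue_morse_double[of "2 * Suc m"] thue_morse_double[of "Suc m"]
  by simp_all

lemma diff_word_3:
  "diff_word f i 3 = [diff_letter f i, diff_letter f (Suc i), diff_letter f (Suc (Suc i))]"
  by (simp add: eval_nat_numeral diff_word_Suc diff_word_def)

lemma diff_word_4:
  "diff_word f i 4 = [diff_letter f i, diff_letter f (Suc i), diff_letter f (Suc (Suc i)),
                      diff_letter f (Suc (Suc (Suc i)))]"
  by (simp add: eval_nat_numeral diff_word_Suc diff_word_def)

lemma vtm_block:
  "vtm (4*m) 4 = (if thue_morse m then [0, 1, 2, if thue_morse (Suc m) then 1 else 0]
                  else [2, 1, 0, if thue_morse (Suc m) then 2 else 1])"
  unfolding diff_word_4 diff_letter_def by (simp add: thue_morse_quadruple)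

lemma vtm_block_prefix: "\<not> thue_morse m \<Longrightarrow> vtm (4*m) 3 = [2, 1, 0]"
  unfolding diff_word_3 diff_letter_def by (simp add: thue_morse_quadruple)

lemma vtm_append_block: "vtm (4*m) (4 + n) = vtm (4*m) 4 @ vtm (4 * Suc m) n"
  using diff_word_add[of thue_morse "4*m" 4 n] by (simp add: add.commute)

lemma vtm_zero_prefix: "\<not> thue_morse z \<Longrightarrow> vtm 0 (4*z + 3) = vtm 0 (4*z) @ [2, 1, 0]"
  using diff_word_add[of thue_morse 0 "4*z" 3] vtm_block_prefix[of z] by simp

text \<open>Appended to a word ending in \<open>210\<close>, a gadget for \<open>w\<close> keeps that word reachable while
  also letting its final \<open>210\<close> grow into \<open>w\<close>.\<close>

definition has_gadget :: "nat list \<Rightarrow> bool" where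
  "has_gadget w \<longleftrightarrow>
     (\<exists>G. set G \<subseteq> {0, 1, 2} \<and> sq_step\<^sup>*\<^sup>* ([2, 1, 0] @ G) [2, 1, 0] \<and> sq_step\<^sup>*\<^sup>* ([2, 1, 0] @ G) w)"

lemma has_gadget_gap_1: "has_gadget [2, 1, 0, 1, 2, 1, 0]"
  unfolding has_gadget_def
  by (rule exI[of _ "[1, 2, 1, 0, 1, 0]"])
    (simp add: contract_seq_reduces[of "[(0, 4), (1, 2)]"] contract_seq_reduces[of "[(5, 2)]"]
      square_at_def contract_at_def)

lemma has_gadget_gap_2: "has_gadget [2, 1, 0, 2, 0, 1, 2, 0, 2, 1, 0]"
  unfolding has_gadget_def
  by (rule exI[of _ "[2, 0, 1, 2, 0, 2, 1, 0, 2, 0, 1, 2, 0, 1, 0, 2, 0, 2, 1, 0]"])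
    (simp add: contract_seq_reduces[of "[(0, 8), (3, 3), (1, 4), (2, 2), (0, 3)]"]
      contract_seq_reduces[of "[(11, 3), (9, 4), (10, 2), (7, 3)]"] square_at_def contract_at_def)

lemma has_gadget_gap_3: "has_gadget [2, 1, 0, 2, 0, 1, 2, 1, 0, 1, 2, 0, 2, 1, 0]"
  unfolding has_gadget_def
  by (rule exI[of _ "[2, 0, 1, 2, 1, 0, 2, 0, 1, 0, 2, 0, 2, 1, 0, 1, 2, 0, 2, 1, 1, 2, 0, 2, 1, 0, 1, 0]"])
    (simp add: contract_seq_reduces[of "[(22, 1), (18, 4), (0, 6), (1, 4), (3, 6), (2, 2), (4, 2), (0, 3)]"]
      contract_seq_reduces[of "[(22, 1), (26, 2), (7, 4), (8, 2), (6, 3), (9, 4)]"]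
      square_at_def contract_at_def)

lemma thue_morse_gap_le_3:
  assumes "\<forall>q. p < q \<and> q < z \<longrightarrow> thue_morse q"
  shows "z \<le> p + 3"
proof (rule ccontr)
  assume "\<not> z \<le> p + 3"
  define j where "j = Suc (Suc p) div 2"
  have "p < 2*j" "Suc (2*j) < z" using \<open>\<not> z \<le> p + 3\<close> by (auto simp: j_def)
  then show False using assms[rule_format, of "2*j"] assms[rule_format, of "Suc (2*j)"] by auto
qed

lemma vtm_gap_1:
  "\<not> thue_morse p \<Longrightarrow> \<not> thue_morse (Suc p) \<Longrightarrow> vtm (4*p) 7 = [2, 1, 0, 1, 2, 1, 0]"
  using vtm_append_block[of p 3] vtm_block[of p] vtm_block_prefix[of "Suc p"] by simp

lemma vtm_gap_2:
  "\<not> thue_morse p \<Longrightarrow> thue_morse (Suc p) \<Longrightarrow> \<not> thue_morse (Suc (Suc p)) \<Longrightarrow>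
    vtm (4*p) 11 = [2, 1, 0, 2, 0, 1, 2, 0, 2, 1, 0]"
  using vtm_append_block[of p 7] vtm_append_block[of "Suc p" 3]
    vtm_block[of p] vtm_block[of "Suc p"] vtm_block_prefix[of "Suc (Suc p)"] by simp

lemma vtm_gap_3:
  "\<not> thue_morse p \<Longrightarrow> thue_morse (Suc p) \<Longrightarrow> thue_morse (Suc (Suc p)) \<Longrightarrow>
    \<not> thue_morse (Suc (Suc (Suc p))) \<Longrightarrow> vtm (4*p) 15 = [2, 1, 0, 2, 0, 1, 2, 1, 0, 1, 2, 0, 2, 1, 0]"
  using vtm_append_block[of p 11] vtm_append_block[of "Suc p" 7] vtm_append_block[of "Suc (Suc p)" 3]
    vtm_block[of p] vtm_block[of "Suc p"] vtm_block[of "Suc (Suc p)"]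
    vtm_block_prefix[of "Suc (Suc (Suc p))"] by simp

lemma has_gadget_vtm_gap:
  assumes "p < z" "\<not> thue_morse p" "\<not> thue_morse z"
    and ones: "\<forall>q. p < q \<and> q < z \<longrightarrow> thue_morse q"
  shows "has_gadget (vtm (4*p) (4*(z - p) + 3))"
proof -
  consider "z = Suc p" | "z = Suc (Suc p)" | "z = Suc (Suc (Suc p))"
    using \<open>p < z\<close> thue_morse_gap_le_3[OF ones] by linarith
  then show ?thesis
  proof cases
    case 1
    then show ?thesis using assms has_gadget_gap_1 vtm_gap_1[of p] by simp
  next
    case 2
    then show ?thesis using assms has_gadget_gap_2 vtm_gap_2[of p] by simp
  next
    case 3
    then show ?thesis using assms has_gadget_gap_3 vtm_gap_3[of p] by simp
  qed
qed

definition reduces_to_vtm_prefixes :: "nat list \<Rightarrow> nat \<Rightarrow> bool" where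
  "reduces_to_vtm_prefixes W n \<longleftrightarrow>
     (\<forall>z\<le>n. \<not> thue_morse z \<longrightarrow> sq_step\<^sup>*\<^sup>* W (vtm 0 (4*z + 3)))"

lemma reduces_to_vtm_prefixes_append_gadget:
  assumes W: "reduces_to_vtm_prefixes W p" and "\<not> thue_morse p" "p < z"
    and ones: "\<forall>q. p < q \<and> q < z \<longrightarrow> thue_morse q"
    and collapse: "sq_step\<^sup>*\<^sup>* ([2, 1, 0] @ G) [2, 1, 0]"
    and extend: "sq_step\<^sup>*\<^sup>* ([2, 1, 0] @ G) (vtm (4*p) (4*(z - p) + 3))"
  shows "reduces_to_vtm_prefixes (W @ G) z"
  unfolding reduces_to_vtm_prefixes_def
proof (intro allI impI)
  have to_block: "sq_step\<^sup>*\<^sup>* (W @ G) (vtm 0 (4*y) @ [2, 1, 0] @ G)"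
    if "y \<le> p" "\<not> thue_morse y" for y
  proof -
    have "sq_step\<^sup>*\<^sup>* W (vtm 0 (4*y + 3))"
      using W that unfolding reduces_to_vtm_prefixes_def by blast
    then show ?thesis using reduces_append_right vtm_zero_prefix[OF that(2)] by fastforce
  qed
  fix y
  assume "y \<le> z" "\<not> thue_morse y"
  then consider "y \<le> p" | "y = z"
    using ones by fastforce
  then show "sq_step\<^sup>*\<^sup>* (W @ G) (vtm 0 (4*y + 3))"
  proof cases
    case 1
    note to_block[OF 1 \<open>\<not> thue_morse y\<close>]
    also have "sq_step\<^sup>*\<^sup>* (vtm 0 (4*y) @ [2, 1, 0] @ G) (vtm 0 (4*y) @ [2, 1, 0])"
      using reduces_append_left[OF collapse] .
    also have "vtm 0 (4*y) @ [2, 1, 0] = vtm 0 (4*y + 3)"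
      using vtm_zero_prefix[OF \<open>\<not> thue_morse y\<close>] by simp
    finally show ?thesis .
  next
    case 2
    note to_block[OF order.refl \<open>\<not> thue_morse p\<close>]
    also have "sq_step\<^sup>*\<^sup>* (vtm 0 (4*p) @ [2, 1, 0] @ G) (vtm 0 (4*p) @ vtm (4*p) (4*(z - p) + 3))"
      using reduces_append_left[OF extend] .
    also have "vtm 0 (4*p) @ vtm (4*p) (4*(z - p) + 3) = vtm 0 (4*y + 3)"
    proof -
      have len: "4*p + (4*(z - p) + 3) = 4*y + 3" using \<open>p < z\<close> 2 by simp
      show ?thesis using diff_word_add[of thue_morse 0 "4*p" "4*(z - p) + 3"] unfolding len by simp
    qed
    finally show ?thesis .
  qed
qed

lemma exists_reduces_to_vtm_prefixes:
  "\<exists>W. set W \<subseteq> {0, 1, 2} \<and> reduces_to_vtm_prefixes W n"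
proof (induction n)
  case 0
  have "vtm 0 3 = [2, 1, 0]" using vtm_block_prefix[of 0] by simp
  then show ?case
    by (intro exI[of _ "[2, 1, 0]"]) (simp add: reduces_to_vtm_prefixes_def)
next
  case (Suc n)
  then obtain W where W: "set W \<subseteq> {0, 1, 2}" "reduces_to_vtm_prefixes W n" by blast
  show ?case
  proof (cases "thue_morse (Suc n)")
    case True
    then have "reduces_to_vtm_prefixes W (Suc n)"
      using W(2) by (auto simp: reduces_to_vtm_prefixes_def le_Suc_eq)
    then show ?thesis using W(1) by blast
  next
    case False
    define p where "p = Max {q. q \<le> n \<and> \<not> thue_morse q}"
    have "p \<in> {q. q \<le> n \<and> \<not> thue_morse q}"
      unfolding p_def by (rule Max_in) auto
    then have p: "p < Suc n" "\<not> thue_morse p" by auto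
    have "q \<le> p" if "q \<le> n" "\<not> thue_morse q" for q
      unfolding p_def by (rule Max_ge) (use that in auto)
    then have ones: "\<forall>q. p < q \<and> q < Suc n \<longrightarrow> thue_morse q"
      by (meson less_Suc_eq_le not_le)
    obtain G where G: "set G \<subseteq> {0, 1, 2}" "sq_step\<^sup>*\<^sup>* ([2, 1, 0] @ G) [2, 1, 0]"
      "sq_step\<^sup>*\<^sup>* ([2, 1, 0] @ G) (vtm (4*p) (4*(Suc n - p) + 3))"
      using has_gadget_vtm_gap[OF p(1,2) False ones] unfolding has_gadget_def by blast
    have "reduces_to_vtm_prefixes W p"
      using W(2) p(1) by (simp add: reduces_to_vtm_prefixes_def)
    then have "reduces_to_vtm_prefixes (W @ G) (Suc n)"
      using reduces_to_vtm_prefixes_append_gadget p(1,2) ones G(2,3) by blast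
    then show ?thesis using W(1) G(1) by (intro exI[of _ "W @ G"]) auto
  qed
qed

lemma card_thue_morse_zeros_le_r:
  assumes "reduces_to_vtm_prefixes W n"
  shows "card {z. z \<le> n \<and> \<not> thue_morse z} \<le> r W"
  unfolding r_def
proof (rule card_inj_on_le)
  show "inj_on (\<lambda>z. vtm 0 (4*z + 3)) {z. z \<le> n \<and> \<not> thue_morse z}"
    by (rule inj_onI) (drule arg_cong[of _ _ length], simp)
  show "(\<lambda>z. vtm 0 (4*z + 3)) ` {z. z \<le> n \<and> \<not> thue_morse z} \<subseteq> reducts W"
    using assms square_free_diff_word[OF overlap_free_thue_morse]
    by (auto simp: reduces_to_vtm_prefixes_def reducts_def)
qed (rule finite_reducts)

lemma card_thue_morse_zeros: "k \<le> card {z. z \<le> 2*k \<and> \<not> thue_morse z}"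
proof -
  define zero where "zero j = (if thue_morse (2*j) then Suc (2*j) else 2*j)" for j
  have "inj_on zero {..<k}"
    by (rule inj_onI) (drule arg_cong[of _ _ "\<lambda>x. x div 2"], simp add: zero_def split: if_splits)
  moreover have "zero ` {..<k} \<subseteq> {z. z \<le> 2*k \<and> \<not> thue_morse z}"
    by (auto simp: zero_def)
  ultimately have "card {..<k} \<le> card {z. z \<le> 2*k \<and> \<not> thue_morse z}"
    by (rule card_inj_on_le) simp
  then show ?thesis by simp
qed

theorem theorem2p4:
  fixes k :: nat
  assumes "k \<ge> 1"
  shows "\<exists>W :: nat list. set W \<subseteq> {0, 1, 2} \<and> r W \<ge> k"
proof -
  obtain W where "set W \<subseteq> {0, 1, 2}" "reduces_to_vtm_prefixes W (2*k)"
    using exists_reduces_to_vtm_prefixes by blast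
  moreover have "k \<le> r W"
    using card_thue_morse_zeros card_thue_morse_zeros_le_r[OF calculation(2)] by (rule le_trans)
  ultimately show ?thesis by blast
qed

end
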